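(* Let $q$ be a prime power, $r\geq1$, $\delta\geq2$ integers and $R=r+\delta-1$. Let $a_1,\dots,a_\ell\in\mathbb{F}_q^*$ be distinct and $h=\prod_{i=1}^{\ell}(T^R-a_i)$. Let $P\in\mathbb{F}_q[T]$ be monic irreducible of degree $m$ with $P\equiv1\pmod h$, let $\alpha\in\mathbb{F}_{q^m}$ be a root of $P$, and let $\bar\phi$ be the Drinfeld module over $\mathbb{F}_{q^m}$ with $\bar\phi_T=\alpha+\tau$. Let $s\geq0$ be an integer and let \[f=\sum_{k=0}^{s}g_k(\tau)\,\bar\phi_{T^R}^{\,k}\] be a nonzero element of $\mathbb{F}_{q^m}\{\tau\}$ with each $g_k\in\mathbb{F}_{q^m}\{\tau\}_{\leq r-1}$. If $s+1\leq\ell$, then the $\mathbb{F}_q$-linear map $x\mapsto f(x)$ (where $\tau^i$ acts as $x\mapsto x^{q^i}$) restricted to $\bar\phi[h]$ is not the zero map.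
   Context: $\mathbb{F}_{q^m}\{\tau\}$ is the twisted polynomial ring with $(a\tau^i)(b\tau^j)=ab^{q^i}\tau^{i+j}$; $\mathbb{F}_{q^m}\{\tau\}_{\leq n}$ denotes its elements $\sum_{i=0}^{n}a_i\tau^i$. A Drinfeld module $\bar\phi:\mathbb{F}_q[T]\to\mathbb{F}_{q^m}\{\tau\}$ is the $\mathbb{F}_q$-algebra homomorphism determined by $\bar\phi_T$; powers $\bar\phi_{T^R}^k$ are products in $\mathbb{F}_{q^m}\{\tau\}$. For $a\in\mathbb{F}_q[T]$, $\bar\phi[a]$ is the set of roots in $\overline{\mathbb{F}}_q$ of the $q$-linearized polynomial obtained from $\bar\phi_a$ by replacing $\tau^i$ with $x^{q^i}$. *)

theory Defs
  imports "HOL-Library.Cardinality" "HOL-Algebra.Algebraic_Closure_Type"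
begin

(* Twisted polynomials K{tau} (Frobenius tau: x \<mapsto> x^q) are represented by
   ordinary polynomials: coeff f i is the coefficient of tau^i.
   Only the additive structure is shared with 'a poly; multiplication is tw_mult. *)

definition tw_mult :: "nat \<Rightarrow> 'a::comm_ring_1 poly \<Rightarrow> 'a poly \<Rightarrow> 'a poly" where
  "tw_mult q f g =
     (\<Sum>i\<le>degree f. \<Sum>j\<le>degree g. monom (coeff f i * coeff g j ^ (q ^ i)) (i + j))"

primrec tw_pow :: "nat \<Rightarrow> 'a::comm_ring_1 poly \<Rightarrow> nat \<Rightarrow> 'a poly" where
  "tw_pow q f 0 = 1"
| "tw_pow q f (Suc n) = tw_mult q (tw_pow q f n) f"

definition tw_eval :: "nat \<Rightarrow> 'a::comm_ring_1 poly \<Rightarrow> 'a \<Rightarrow> 'a" where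
  "tw_eval q f x = (\<Sum>i\<le>degree f. coeff f i * x ^ (q ^ i))"

definition drinfeld :: "'q::{field,finite} alg_closure poly \<Rightarrow> 'q poly \<Rightarrow> 'q alg_closure poly" where
  "drinfeld phiT a =
     (\<Sum>i\<le>degree a. smult (to_ac (coeff a i)) (tw_pow CARD('q) phiT i))"

definition drinfeld_torsion :: "'q::{field,finite} alg_closure poly \<Rightarrow> 'q poly \<Rightarrow> 'q alg_closure set" where
  "drinfeld_torsion phiT a = {x. tw_eval CARD('q) (drinfeld phiT a) x = 0}"

definition Fqm :: "nat \<Rightarrow> 'q::{field,finite} alg_closure set" where
  "Fqm m = {x. x ^ (CARD('q) ^ m) = x}"

end

theory Submission
  imports Defs
begin

(* Write \<Phi> x = \<alpha> x + x^q for the action of \<phi>_T and c_j for the image of a_j in the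
   closure. For each j the torsion \<phi>[T^R - a_j], which lies in \<phi>[h], is the c_j-eigenspace
   of \<Phi>^R: the zero set of a polynomial of degree q^R whose formal derivative is the
   constant \<alpha>^R - c_j. That constant is nonzero because P(\<alpha>) = 0 while P = 1 mod T^R - a_j,
   so the eigenspace has exactly q^R elements. On it \<phi>_{T^R} acts as the scalar c_j, so f acts
   as G_j = \<Sum>_k c_j^k g_k, a twisted polynomial of \<tau>-degree at most r - 1, which has at most
   q^(r-1) roots. Hence if f vanished on \<phi>[h], every G_j would be zero; as the c_j are
   l > s distinct values, a Vandermonde argument then forces all g_k = 0, i.e. f = 0. *)

section \<open>Finite fields and the Frobenius map\<close>

lemma CARD_field_ge_2: "CARD('a::{field,finite}) \<ge> 2"
proof -
  have "card {0::'a, 1} \<le> CARD('a)"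
    by (rule card_mono) auto
  then show ?thesis
    by simp
qed

lemma power_card_eq_self:
  fixes x :: "'a::{field,finite}"
  shows "x ^ CARD('a) = x"
proof (cases "x = 0")
  case False
  let ?U = "UNIV - {0::'a}"
  have "bij_betw ((*) x) ?U ?U"
    by (rule bij_betwI[of _ _ _ "\<lambda>y. y / x"]) (use False in auto)
  then have "(\<Prod>y\<in>?U. x * y) = \<Prod>?U"
    by (rule prod.reindex_bij_betw)
  then have "x ^ card ?U * \<Prod>?U = 1 * \<Prod>?U"
    by (simp add: prod.distrib)
  moreover have "\<Prod>?U \<noteq> 0"
    by simp
  ultimately have "x ^ (CARD('a) - 1) = 1"
    by (simp add: card_Diff_singleton)
  then show ?thesis
    by (simp add: power_eq_if)
qed simp

lemma power_card_power_eq_self: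
  fixes x :: "'a::{field,finite}"
  shows "x ^ (CARD('a) ^ n) = x"
  by (induction n) (simp_all add: power_mult power_card_eq_self)

(* On the field, (x + 1)^q = x^q + 1, so \<Sum>_{0<i<q} (q choose i) X^i has degree < q
   and vanishes at all q points. *)
lemma CHAR_dvd_card_choose:
  assumes "0 < k" "k < CARD('a::{field,finite})"
  shows "CHAR('a) dvd (CARD('a) choose k)"
proof -
  define q where "q = CARD('a)"
  have "q \<ge> 2"
    using CARD_field_ge_2[where 'a = 'a] by (simp add: q_def)
  define D :: "'a poly" where "D = (\<Sum>i\<in>{1..<q}. monom (of_nat (q choose i)) i)"
  have "poly D x = poly 0 x" for x
  proof -
    have "x ^ q + 1 = (x + 1) ^ q"
      by (simp add: q_def power_card_eq_self)
    also have "\<dots> = (\<Sum>i\<le>q. of_nat (q choose i) * x ^ i)"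
      by (simp add: binomial_ring)
    also have "{..q} = insert 0 (insert q {1..<q})"
      using \<open>q \<ge> 2\<close> by auto
    also have "(\<Sum>i\<in>insert 0 (insert q {1..<q}). of_nat (q choose i) * x ^ i) =
        1 + x ^ q + poly D x"
      using \<open>q \<ge> 2\<close> by (simp add: D_def poly_sum poly_monom)
    finally show ?thesis
      by simp
  qed
  moreover have "degree D < card (UNIV :: 'a set)"
  proof -
    have "degree D \<le> q - 1"
      unfolding D_def by (rule degree_sum_le) (auto intro: order.trans[OF degree_monom_le])
    then show ?thesis
      using \<open>q \<ge> 2\<close> by (simp add: q_def)
  qed
  ultimately have "D = 0"
    by (intro poly_eqI_degree[of UNIV]) auto
  then have "coeff D k = 0"
    by simp
  moreover have "coeff D k = of_nat (q choose k)"
    using assms by (simp add: D_def coeff_sum q_def)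
  ultimately show ?thesis
    by (simp add: q_def of_nat_eq_0_iff_char_dvd)
qed

lemma freshmans_dream_card:
  fixes x y :: "'b::comm_semiring_1"
  assumes "CHAR('b) = CHAR('a::{field,finite})"
  shows "(x + y) ^ CARD('a) = x ^ CARD('a) + y ^ CARD('a)"
proof -
  define q where "q = CARD('a)"
  have "q \<ge> 2"
    using CARD_field_ge_2[where 'a = 'a] by (simp add: q_def)
  have "(x + y) ^ q = (\<Sum>k\<le>q. of_nat (q choose k) * x ^ k * y ^ (q - k))"
    by (rule binomial_ring)
  also have "\<dots> = (\<Sum>k\<in>{0, q}. of_nat (q choose k) * x ^ k * y ^ (q - k))"
  proof (rule sum.mono_neutral_right)
    show "\<forall>k\<in>{..q} - {0, q}. of_nat (q choose k) * x ^ k * y ^ (q - k) = 0"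
    proof
      fix k assume "k \<in> {..q} - {0, q}"
      then have "CHAR('b) dvd (q choose k)"
        unfolding assms q_def by (intro CHAR_dvd_card_choose) auto
      then have "of_nat (q choose k) = (0::'b)"
        by (simp only: of_nat_eq_0_iff_char_dvd)
      then show "of_nat (q choose k) * x ^ k * y ^ (q - k) = 0"
        by simp
    qed
  qed auto
  also have "\<dots> = x ^ q + y ^ q"
    using \<open>q \<ge> 2\<close> by (simp add: add.commute)
  finally show ?thesis
    by (simp add: q_def)
qed

lemma freshmans_dream_card_power:
  fixes x y :: "'b::comm_semiring_1"
  assumes "CHAR('b) = CHAR('a::{field,finite})"
  shows "(x + y) ^ (CARD('a) ^ n) = x ^ (CARD('a) ^ n) + y ^ (CARD('a) ^ n)"
  by (induction n)
     (simp_all del: power_Suc add: power_Suc2 power_mult freshmans_dream_card[OF assms])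

lemma freshmans_dream_card_power_sum:
  fixes f :: "'c \<Rightarrow> 'b::comm_semiring_1"
  assumes "CHAR('b) = CHAR('a::{field,finite})"
  shows "(\<Sum>i\<in>A. f i) ^ (CARD('a) ^ n) = (\<Sum>i\<in>A. f i ^ (CARD('a) ^ n))"
  by (induction A rule: infinite_finite_induct)
     (simp_all add: freshmans_dream_card_power[OF assms] power_0_left)

lemma of_nat_CARD_alg_closure: "of_nat CARD('a::{field,finite}) = (0::'a alg_closure)"
proof -
  have "CHAR('a) dvd (CARD('a) choose 1)"
    using CARD_field_ge_2[where 'a = 'a] by (intro CHAR_dvd_card_choose) auto
  then show ?thesis
    by (simp add: of_nat_eq_0_iff_char_dvd)
qed

lemma card_roots_separable:
  fixes p :: "'a::alg_closed_field poly"
  assumes "p \<noteq> 0" "\<And>x. poly p x = 0 \<Longrightarrow> poly (pderiv p) x \<noteq> 0"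
  shows "card {x. poly p x = 0} = degree p"
  using assms
proof (induction "degree p" arbitrary: p rule: less_induct)
  case (less p)
  show ?case
  proof (cases "degree p = 0")
    case True
    then obtain c where "p = [:c:]"
      by (metis degree_eq_zeroE)
    with less.prems True show ?thesis
      by simp
  next
    case False
    then obtain x where x: "poly p x = 0"
      using alg_closed_imp_poly_has_root by blast
    then obtain p' where p: "p = [:-x, 1:] * p'"
      by (metis dvdE poly_eq_0_iff_dvd)
    have "p' \<noteq> 0"
      using less.prems p by auto
    then have degree: "degree p = Suc (degree p')"
      unfolding p by (subst degree_mult_eq) auto
    have pderiv: "pderiv p = p' + [:-x, 1:] * pderiv p'"
      unfolding p by (simp only: pderiv_mult) (simp add: pderiv_pCons add.commute)
    have "poly p' x \<noteq> 0"
      using less.prems(2)[OF x] by (simp add: pderiv)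
    moreover have "card {y. poly p' y = 0} = degree p'"
    proof (rule less.hyps)
      fix y assume "poly p' y = 0"
      then show "poly (pderiv p') y \<noteq> 0"
        using less.prems(2)[of y] p pderiv by auto
    qed (use degree \<open>p' \<noteq> 0\<close> in auto)
    moreover have "{y. poly p y = 0} = insert x {y. poly p' y = 0}"
      using p x by auto
    ultimately show ?thesis
      using degree poly_roots_finite[OF \<open>p' \<noteq> 0\<close>] by simp
  qed
qed

lemma sum_smult_powers_eq_0_imp_eq_0:
  fixes g :: "nat \<Rightarrow> 'a::idom poly" and c :: "nat \<Rightarrow> 'a"
  assumes "inj_on c {..<l}" "s < l" "\<And>j. j < l \<Longrightarrow> (\<Sum>k\<le>s. smult (c j ^ k) (g k)) = 0"
    and "k \<le> s"
  shows "g k = 0"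
proof (rule poly_eqI)
  fix i
  define V where "V = (\<Sum>k\<le>s. monom (coeff (g k) i) k)"
  have "poly V z = poly 0 z" if "z \<in> c ` {..<l}" for z
  proof -
    obtain j where "j < l" "z = c j"
      using \<open>z \<in> c ` {..<l}\<close> by auto
    then have "poly V z = coeff (\<Sum>k\<le>s. smult (c j ^ k) (g k)) i"
      by (simp add: V_def poly_sum poly_monom coeff_sum mult.commute)
    then show ?thesis
      using assms(3)[OF \<open>j < l\<close>] by simp
  qed
  moreover have "degree V \<le> s"
    unfolding V_def by (rule degree_sum_le) (auto intro: order.trans[OF degree_monom_le])
  moreover have "card (c ` {..<l}) = l"
    using assms(1) by (simp add: card_image)
  ultimately have "V = 0"
    using assms(2) by (intro poly_eqI_degree[of "c ` {..<l}"]) auto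
  moreover have "coeff V k = coeff (g k) i"
    using assms(4) by (simp add: V_def coeff_sum)
  ultimately show "coeff (g k) i = coeff 0 i"
    by simp
qed

lemma map_poly_to_ac_diff: "map_poly to_ac (p - q) = map_poly to_ac p - map_poly to_ac q"
  by (rule poly_eqI) (simp add: coeff_map_poly)

lemma map_poly_to_ac_mult: "map_poly to_ac (p * q) = map_poly to_ac p * map_poly to_ac q"
proof (induction p)
  case (pCons c p)
  have "map_poly to_ac (pCons c p * q) = map_poly to_ac (smult c q + pCons 0 (p * q))"
    by simp
  also have "\<dots> = smult (to_ac c) (map_poly to_ac q) + pCons 0 (map_poly to_ac (p * q))"
    by (rule poly_eqI) (simp add: coeff_map_poly coeff_pCons split: nat.split)
  finally show ?case
    by (simp add: pCons.IH map_poly_pCons)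
qed simp

lemma poly_map_to_ac_nonzero_if_dvd_diff_1:
  assumes "p dvd Q - 1" "poly (map_poly to_ac Q) x = 0"
  shows "poly (map_poly to_ac p) x \<noteq> 0"
proof -
  obtain k where "Q - 1 = p * k"
    using assms(1) by (elim dvdE)
  then have "map_poly to_ac Q - 1 = map_poly to_ac p * map_poly to_ac k"
    by (metis map_poly_to_ac_diff map_poly_to_ac_mult map_poly_1' to_ac_1)
  then have "poly (map_poly to_ac Q) x - 1 =
      poly (map_poly to_ac p) x * poly (map_poly to_ac k) x"
    by (metis poly_1 poly_diff poly_mult)
  then show ?thesis
    using assms(2) by auto
qed

section \<open>Evaluation of twisted polynomials\<close>

lemma tw_eval_eq_sum_atMost:
  "degree f \<le> N \<Longrightarrow> tw_eval q f x = (\<Sum>i\<le>N. coeff f i * x ^ (q ^ i))"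
  unfolding tw_eval_def by (rule sum.mono_neutral_left) (auto simp: coeff_eq_0)

lemma tw_eval_0 [simp]: "tw_eval q 0 x = 0"
  by (simp add: tw_eval_def)

lemma tw_eval_1 [simp]: "tw_eval q 1 x = x"
  by (simp add: tw_eval_def)

lemma tw_eval_add: "tw_eval q (f + g) x = tw_eval q f x + tw_eval q g x"
proof -
  define N where "N = max (degree f) (degree g)"
  have "degree (f + g) \<le> N"
    unfolding N_def by (rule degree_add_le) auto
  then show ?thesis
    by (subst (1 2 3) tw_eval_eq_sum_atMost[where N = N])
       (auto simp: N_def sum.distrib distrib_right)
qed

lemma tw_eval_sum: "tw_eval q (\<Sum>i\<in>A. f i) x = (\<Sum>i\<in>A. tw_eval q (f i) x)"
  by (induction A rule: infinite_finite_induct) (simp_all add: tw_eval_add)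

lemma tw_eval_smult: "tw_eval q (smult c f) x = c * tw_eval q f x"
  by (subst (1 2) tw_eval_eq_sum_atMost[where N = "degree f"])
     (auto simp: degree_smult_le sum_distrib_left mult.assoc)

lemma tw_eval_monom: "tw_eval q (monom c n) x = c * x ^ (q ^ n)"
proof -
  have "tw_eval q (monom c n) x = (\<Sum>i\<le>n. coeff (monom c n) i * x ^ (q ^ i))"
    by (rule tw_eval_eq_sum_atMost) (rule degree_monom_le)
  also have "\<dots> = (\<Sum>i\<le>n. if i = n then c * x ^ (q ^ n) else 0)"
    by (rule sum.cong) auto
  finally show ?thesis
    by simp
qed

lemma tw_eval_pCons_1: "tw_eval q [:c, 1:] = (\<lambda>x. c * x + x ^ q)"
  by (simp add: fun_eq_iff tw_eval_def)

lemma card_tw_eval_roots_le: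
  fixes f :: "'a::idom poly"
  assumes "f \<noteq> 0" "q \<ge> 2"
  shows "finite {x. tw_eval q f x = 0}" "card {x. tw_eval q f x = 0} \<le> q ^ degree f"
proof -
  define L where "L = (\<Sum>i\<le>degree f. monom (coeff f i) (q ^ i))"
  have roots: "{x. tw_eval q f x = 0} = {x. poly L x = 0}"
    by (simp add: L_def tw_eval_def poly_sum poly_monom)
  have "coeff L (q ^ degree f) = (\<Sum>i\<le>degree f. if i = degree f then lead_coeff f else 0)"
    unfolding L_def coeff_sum coeff_monom using assms(2) by (intro sum.cong) auto
  then have "L \<noteq> 0"
    using assms(1) by auto
  have "degree L \<le> q ^ degree f"
    unfolding L_def using assms(2)
    by (intro degree_sum_le) (auto intro: order.trans[OF degree_monom_le])
  then show "card {x. tw_eval q f x = 0} \<le> q ^ degree f"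
    unfolding roots using card_poly_roots_bound[OF \<open>L \<noteq> 0\<close>] by linarith
  show "finite {x. tw_eval q f x = 0}"
    unfolding roots using \<open>L \<noteq> 0\<close> by (rule poly_roots_finite)
qed

lemma tw_poly_eq_0_if_vanishes:
  fixes f :: "'a::idom poly"
  assumes "q \<ge> 2" "q ^ degree f < card S" "\<forall>x\<in>S. tw_eval q f x = 0"
  shows "f = 0"
proof (rule ccontr)
  assume "f \<noteq> 0"
  then have "card S \<le> card {x. tw_eval q f x = 0}"
    using assms(3) card_tw_eval_roots_le(1)[OF _ assms(1)] by (intro card_mono) auto
  also have "\<dots> \<le> q ^ degree f"
    using \<open>f \<noteq> 0\<close> assms(1) by (rule card_tw_eval_roots_le(2))
  finally show False
    using assms(2) by simp
qed

lemma tw_eval_add_right: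
  fixes f :: "'a::{field,finite} alg_closure poly"
  shows "tw_eval CARD('a) f (x + y) = tw_eval CARD('a) f x + tw_eval CARD('a) f y"
  unfolding tw_eval_def
  by (simp add: freshmans_dream_card_power[OF CHAR_alg_closure] distrib_left sum.distrib)

lemma tw_eval_to_ac_mult:
  fixes f :: "'a::{field,finite} alg_closure poly"
  shows "tw_eval CARD('a) f (to_ac c * x) = to_ac c * tw_eval CARD('a) f x"
  unfolding tw_eval_def
  by (simp add: power_mult_distrib power_card_power_eq_self sum_distrib_left mult.left_commute
      flip: to_ac_power)

lemma tw_mult_0_left [simp]: "tw_mult q 0 g = 0"
  by (simp add: tw_mult_def)

lemma tw_eval_tw_mult:
  fixes f g :: "'a::{field,finite} alg_closure poly"
  shows "tw_eval CARD('a) (tw_mult CARD('a) f g) x = tw_eval CARD('a) f (tw_eval CARD('a) g x)"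
proof -
  define q where "q = CARD('a)"
  have "tw_eval q (tw_mult q f g) x =
      (\<Sum>i\<le>degree f. \<Sum>j\<le>degree g. coeff f i * coeff g j ^ (q ^ i) * x ^ (q ^ (i + j)))"
    unfolding tw_mult_def by (simp add: tw_eval_sum tw_eval_monom)
  also have "\<dots> = (\<Sum>i\<le>degree f. coeff f i * (\<Sum>j\<le>degree g. coeff g j * x ^ (q ^ j)) ^ (q ^ i))"
    unfolding q_def freshmans_dream_card_power_sum[OF CHAR_alg_closure]
    by (simp add: sum_distrib_left power_mult_distrib power_add mult_ac flip: power_mult)
  also have "\<dots> = tw_eval q f (tw_eval q g x)"
    by (simp add: tw_eval_def)
  finally show ?thesis
    by (simp add: q_def)
qed

lemma tw_eval_tw_pow:
  fixes f :: "'a::{field,finite} alg_closure poly"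
  shows "tw_eval CARD('a) (tw_pow CARD('a) f n) = tw_eval CARD('a) f ^^ n"
  by (induction n) (simp_all add: tw_eval_tw_mult funpow_Suc_right fun_eq_iff del: funpow.simps)

definition Fq_linear :: "('a::field alg_closure \<Rightarrow> 'a alg_closure) \<Rightarrow> bool" where
  "Fq_linear F \<longleftrightarrow> (\<forall>x y. F (x + y) = F x + F y) \<and> (\<forall>c x. F (to_ac c * x) = to_ac c * F x)"

lemma Fq_linear_add: "Fq_linear F \<Longrightarrow> F (x + y) = F x + F y"
  by (simp add: Fq_linear_def)

lemma Fq_linear_to_ac_mult: "Fq_linear F \<Longrightarrow> F (to_ac c * x) = to_ac c * F x"
  by (simp add: Fq_linear_def)

lemma Fq_linear_0: "Fq_linear F \<Longrightarrow> F 0 = 0"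
  using Fq_linear_to_ac_mult[of F 0 0] by simp

lemma Fq_linear_sum: "Fq_linear F \<Longrightarrow> F (\<Sum>i\<in>A. g i) = (\<Sum>i\<in>A. F (g i))"
  by (induction A rule: infinite_finite_induct) (simp_all add: Fq_linear_0 Fq_linear_add)

lemma Fq_linear_funpow: "Fq_linear F \<Longrightarrow> Fq_linear (F ^^ n)"
  by (induction n) (simp_all add: Fq_linear_def)

lemma Fq_linear_tw_eval: "Fq_linear (tw_eval CARD('a) (f :: 'a::{field,finite} alg_closure poly))"
  by (simp add: Fq_linear_def tw_eval_add_right tw_eval_to_ac_mult)

section \<open>Torsion of the Drinfeld module\<close>

definition poly_op ::
    "('a::field alg_closure \<Rightarrow> 'a alg_closure) \<Rightarrow> 'a poly \<Rightarrow> 'a alg_closure \<Rightarrow> 'a alg_closure"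
  where "poly_op F a x = (\<Sum>i\<le>degree a. to_ac (coeff a i) * (F ^^ i) x)"

lemma poly_op_eq_sum_atMost:
  "degree a \<le> N \<Longrightarrow> poly_op F a x = (\<Sum>i\<le>N. to_ac (coeff a i) * (F ^^ i) x)"
  unfolding poly_op_def by (rule sum.mono_neutral_left) (auto simp: coeff_eq_0)

lemma poly_op_0 [simp]: "poly_op F 0 x = 0"
  by (simp add: poly_op_def)

lemma poly_op_add: "poly_op F (a + b) x = poly_op F a x + poly_op F b x"
proof -
  define N where "N = max (degree a) (degree b)"
  have "degree (a + b) \<le> N"
    unfolding N_def by (rule degree_add_le) auto
  then show ?thesis
    by (subst (1 2 3) poly_op_eq_sum_atMost[where N = N])
       (auto simp: N_def sum.distrib distrib_right)
qed

lemma poly_op_diff: "poly_op F (a - b) x = poly_op F a x - poly_op F b x"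
  using poly_op_add[of F "a - b" b x] by simp

lemma poly_op_smult: "poly_op F (smult c a) x = to_ac c * poly_op F a x"
  by (subst (1 2) poly_op_eq_sum_atMost[where N = "degree a"])
     (auto simp: degree_smult_le sum_distrib_left mult.assoc)

lemma poly_op_monom: "poly_op F (monom c n) x = to_ac c * (F ^^ n) x"
proof -
  have "poly_op F (monom c n) x = (\<Sum>i\<le>n. to_ac (coeff (monom c n) i) * (F ^^ i) x)"
    by (rule poly_op_eq_sum_atMost) (rule degree_monom_le)
  also have "\<dots> = (\<Sum>i\<le>n. if i = n then to_ac c * (F ^^ n) x else 0)"
    by (rule sum.cong) auto
  finally show ?thesis
    by simp
qed

lemma poly_op_pCons:
  assumes "Fq_linear F"
  shows "poly_op F (pCons c a) x = to_ac c * x + F (poly_op F a x)"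
proof -
  have "poly_op F (pCons c a) x = (\<Sum>i\<le>Suc (degree a). to_ac (coeff (pCons c a) i) * (F ^^ i) x)"
    by (rule poly_op_eq_sum_atMost) (simp add: degree_pCons_le)
  also have "\<dots> = to_ac c * x + (\<Sum>i\<le>degree a. to_ac (coeff a i) * (F ^^ Suc i) x)"
    by (subst sum.atMost_Suc_shift) simp
  also have "(\<Sum>i\<le>degree a. to_ac (coeff a i) * (F ^^ Suc i) x) = F (poly_op F a x)"
    using assms by (simp add: poly_op_def Fq_linear_sum Fq_linear_to_ac_mult)
  finally show ?thesis .
qed

lemma poly_op_mult:
  assumes "Fq_linear F"
  shows "poly_op F (a * b) x = poly_op F a (poly_op F b x)"
proof (induction a)
  case (pCons c a)
  have "poly_op F (pCons c a * b) x = poly_op F (smult c b + pCons 0 (a * b)) x"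
    by simp
  also have "\<dots> = to_ac c * poly_op F b x + F (poly_op F (a * b) x)"
    by (simp add: poly_op_add poly_op_smult poly_op_pCons[OF assms])
  also have "\<dots> = poly_op F (pCons c a) (poly_op F b x)"
    by (simp add: poly_op_pCons[OF assms] pCons.IH)
  finally show ?case .
qed simp

lemma Fq_linear_poly_op:
  assumes "Fq_linear F"
  shows "Fq_linear (poly_op F a)"
  using Fq_linear_add[OF Fq_linear_funpow[OF assms]]
    Fq_linear_to_ac_mult[OF Fq_linear_funpow[OF assms]]
  by (auto simp: Fq_linear_def poly_op_def sum.distrib distrib_left sum_distrib_left
      mult.left_commute)

lemma tw_eval_drinfeld:
  fixes \<phi>T :: "'a::{field,finite} alg_closure poly"
  shows "tw_eval CARD('a) (drinfeld \<phi>T a) x = poly_op (tw_eval CARD('a) \<phi>T) a x"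
  by (simp add: drinfeld_def poly_op_def tw_eval_sum tw_eval_smult tw_eval_tw_pow)

lemma tw_eval_drinfeld_monom_1:
  fixes \<phi>T :: "'a::{field,finite} alg_closure poly"
  shows "tw_eval CARD('a) (drinfeld \<phi>T (monom 1 n)) = tw_eval CARD('a) \<phi>T ^^ n"
  by (simp add: fun_eq_iff tw_eval_drinfeld poly_op_monom)

lemma drinfeld_torsion_dvd:
  fixes \<phi>T :: "'a::{field,finite} alg_closure poly"
  assumes "b dvd a"
  shows "drinfeld_torsion \<phi>T b \<subseteq> drinfeld_torsion \<phi>T a"
proof
  fix x assume x: "x \<in> drinfeld_torsion \<phi>T b"
  obtain k where "a = k * b"
    using assms by (metis dvdE mult.commute)
  then have "tw_eval CARD('a) (drinfeld \<phi>T a) x = poly_op (tw_eval CARD('a) \<phi>T) k 0"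
    using x by (simp add: drinfeld_torsion_def tw_eval_drinfeld poly_op_mult Fq_linear_tw_eval)
  also have "\<dots> = 0"
    by (intro Fq_linear_0 Fq_linear_poly_op Fq_linear_tw_eval)
  finally show "x \<in> drinfeld_torsion \<phi>T a"
    by (simp add: drinfeld_torsion_def)
qed

lemma drinfeld_torsion_T_pow_minus_const:
  fixes \<phi>T :: "'a::{field,finite} alg_closure poly"
  shows "drinfeld_torsion \<phi>T (monom 1 n - [:c:]) =
    {x. (tw_eval CARD('a) \<phi>T ^^ n) x = to_ac c * x}"
  by (simp add: drinfeld_torsion_def tw_eval_drinfeld poly_op_diff poly_op_monom flip: monom_0)

(* For \<phi>_T = \<alpha> + \<tau>, the polynomial whose evaluation is that of \<phi>_{T^n}. *)
primrec phiT_pow_poly :: "nat \<Rightarrow> 'a::comm_ring_1 \<Rightarrow> nat \<Rightarrow> 'a poly" where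
  "phiT_pow_poly q \<alpha> 0 = [:0, 1:]"
| "phiT_pow_poly q \<alpha> (Suc n) = smult \<alpha> (phiT_pow_poly q \<alpha> n) + phiT_pow_poly q \<alpha> n ^ q"

lemma poly_phiT_pow_poly: "poly (phiT_pow_poly q \<alpha> n) x = ((\<lambda>y. \<alpha> * y + y ^ q) ^^ n) x"
  by (induction n) simp_all

lemma phiT_pow_poly_degree_lead_coeff:
  fixes \<alpha> :: "'a::idom"
  assumes "q \<ge> 2"
  shows "degree (phiT_pow_poly q \<alpha> n) = q ^ n \<and> lead_coeff (phiT_pow_poly q \<alpha> n) = 1"
proof (induction n)
  case (Suc n)
  let ?L = "phiT_pow_poly q \<alpha> n"
  have "?L \<noteq> 0"
    using Suc by auto
  then have "degree (?L ^ q) = q ^ Suc n"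
    using Suc by (simp add: degree_power_eq mult.commute)
  moreover have "degree (smult \<alpha> ?L) < q ^ Suc n"
    using Suc assms by (auto intro: le_less_trans[OF degree_smult_le])
  ultimately have lt: "degree (smult \<alpha> ?L) < degree (?L ^ q)"
    by simp
  have "lead_coeff (?L ^ q) = 1"
    using conjunct2[OF Suc] by (simp add: lead_coeff_power)
  then have "lead_coeff (phiT_pow_poly q \<alpha> (Suc n)) = 1"
    by (simp only: phiT_pow_poly.simps lead_coeff_add_le[OF lt])
  moreover have "degree (phiT_pow_poly q \<alpha> (Suc n)) = q ^ Suc n"
    using \<open>degree (?L ^ q) = q ^ Suc n\<close>
    by (simp only: phiT_pow_poly.simps degree_add_eq_right[OF lt])
  ultimately show ?case
    by blast
qed simp

lemma pderiv_phiT_pow_poly: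
  fixes \<alpha> :: "'a::idom"
  assumes "of_nat q = (0::'a)"
  shows "pderiv (phiT_pow_poly q \<alpha> n) = [:\<alpha> ^ n:]"
  by (induction n) (simp_all add: pderiv_add pderiv_smult pderiv_power pderiv_pCons assms)

lemma card_phiT_eigenspace:
  fixes \<alpha> c :: "'a::alg_closed_field"
  assumes "q \<ge> 2" "of_nat q = (0::'a)" "n \<ge> 1" "\<alpha> ^ n \<noteq> c"
  defines "E \<equiv> {x. ((\<lambda>y. \<alpha> * y + y ^ q) ^^ n) x = c * x}"
  shows "finite E" "card E = q ^ n"
proof -
  define M where "M = phiT_pow_poly q \<alpha> n - [:0, c:]"
  have E: "E = {x. poly M x = 0}"
    by (simp add: E_def M_def poly_phiT_pow_poly mult.commute)
  have "q \<le> q ^ n"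
    using power_increasing[of 1 n q] assms(1,3) by simp
  moreover have "degree [:0, c:] \<le> 1"
    by (simp add: degree_pCons_le)
  ultimately have "degree [:0, c:] < degree (phiT_pow_poly q \<alpha> n)"
    using assms(1) phiT_pow_poly_degree_lead_coeff[OF assms(1), THEN conjunct1, of \<alpha> n]
    by linarith
  then have "degree M = degree (phiT_pow_poly q \<alpha> n)"
    unfolding M_def diff_conv_add_uminus by (simp only: degree_add_eq_left degree_minus)
  then have "degree M = q ^ n"
    using phiT_pow_poly_degree_lead_coeff[OF assms(1), THEN conjunct1] by simp
  with \<open>q \<le> q ^ n\<close> assms(1) have "M \<noteq> 0"
    by auto
  have "pderiv M = [:\<alpha> ^ n - c:]"
    by (simp add: M_def pderiv_diff pderiv_phiT_pow_poly[OF assms(2)] pderiv_pCons)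
  then have "card {x. poly M x = 0} = degree M"
    using assms(4) by (intro card_roots_separable[OF \<open>M \<noteq> 0\<close>]) simp
  then show "card E = q ^ n"
    using E \<open>degree M = q ^ n\<close> by simp
  show "finite E"
    unfolding E using \<open>M \<noteq> 0\<close> by (rule poly_roots_finite)
qed

lemma card_drinfeld_torsion_T_pow_minus_const:
  fixes \<alpha> :: "'a::{field,finite} alg_closure"
  assumes "n \<ge> 1" "\<alpha> ^ n \<noteq> to_ac c"
  shows "finite (drinfeld_torsion [:\<alpha>, 1:] (monom 1 n - [:c:]))"
    and "card (drinfeld_torsion [:\<alpha>, 1:] (monom 1 n - [:c:])) = CARD('a) ^ n"
  using card_phiT_eigenspace[OF CARD_field_ge_2 of_nat_CARD_alg_closure assms]
  by (simp_all add: drinfeld_torsion_T_pow_minus_const tw_eval_pCons_1)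

lemma tw_eval_sum_tw_pow_eigenvector:
  fixes D :: "'a::{field,finite} alg_closure poly"
  assumes "tw_eval CARD('a) D x = to_ac c * x"
  shows "tw_eval CARD('a) (\<Sum>k\<le>s. tw_mult CARD('a) (g k) (tw_pow CARD('a) D k)) x =
    tw_eval CARD('a) (\<Sum>k\<le>s. smult (to_ac c ^ k) (g k)) x"
proof -
  have power_scale:
    "tw_eval CARD('a) f (to_ac c ^ k * y) = to_ac c ^ k * tw_eval CARD('a) f y" for f k y
    using tw_eval_to_ac_mult[of f "c ^ k" y] by simp
  have "(tw_eval CARD('a) D ^^ k) x = to_ac c ^ k * x" for k
    by (induction k) (simp_all add: power_scale assms mult.left_commute)
  then show ?thesis
    by (simp add: tw_eval_sum tw_eval_tw_mult tw_eval_tw_pow tw_eval_smult power_scale)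
qed

lemma sum_smult_eq_0_if_vanishes_on_torsion:
  fixes \<alpha> :: "'a::{field,finite} alg_closure"
  assumes "\<alpha> ^ R \<noteq> to_ac c" and "\<forall>k\<le>s. degree (g k) < R"
    and "\<forall>x\<in>drinfeld_torsion [:\<alpha>, 1:] (monom 1 R - [:c:]).
           tw_eval CARD('a) (\<Sum>k\<le>s. tw_mult CARD('a) (g k)
             (tw_pow CARD('a) (drinfeld [:\<alpha>, 1:] (monom 1 R)) k)) x = 0"
  shows "(\<Sum>k\<le>s. smult (to_ac c ^ k) (g k)) = 0"
proof (rule tw_poly_eq_0_if_vanishes)
  let ?E = "drinfeld_torsion [:\<alpha>, 1:] (monom 1 R - [:c:])"
  let ?G = "\<Sum>k\<le>s. smult (to_ac c ^ k) (g k)"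
  have "R \<ge> 1"
    using assms(2) by auto
  have "degree ?G \<le> R - 1"
    using assms(2) by (intro degree_sum_le) (auto intro: order.trans[OF degree_smult_le])
  then have "CARD('a) ^ degree ?G < CARD('a) ^ R"
    using \<open>R \<ge> 1\<close> CARD_field_ge_2[where 'a = 'a] by (intro power_strict_increasing) auto
  also have "\<dots> = card ?E"
    using card_drinfeld_torsion_T_pow_minus_const(2)[OF \<open>R \<ge> 1\<close> assms(1)] by simp
  finally show "CARD('a) ^ degree ?G < card ?E" .
  show "\<forall>x\<in>?E. tw_eval CARD('a) ?G x = 0"
  proof
    fix x assume "x \<in> ?E"
    then have "tw_eval CARD('a) (drinfeld [:\<alpha>, 1:] (monom 1 R)) x = to_ac c * x"
      by (simp add: drinfeld_torsion_T_pow_minus_const tw_eval_drinfeld_monom_1)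
    then have "tw_eval CARD('a) ?G x = tw_eval CARD('a) (\<Sum>k\<le>s. tw_mult CARD('a) (g k)
        (tw_pow CARD('a) (drinfeld [:\<alpha>, 1:] (monom 1 R)) k)) x"
      by (rule tw_eval_sum_tw_pow_eigenvector[symmetric])
    also have "\<dots> = 0"
      using assms(3) \<open>x \<in> ?E\<close> by blast
    finally show "tw_eval CARD('a) ?G x = 0" .
  qed
qed (rule CARD_field_ge_2)

theorem lemma3p3:
  fixes r \<delta> R l m s :: nat
    and a :: "nat \<Rightarrow> 'q::{field,finite}"
    and h P :: "'q poly"
    and \<alpha> :: "'q alg_closure"
    and g :: "nat \<Rightarrow> 'q alg_closure poly"
    and f :: "'q alg_closure poly"
  assumes "r \<ge> 1" and "\<delta> \<ge> 2" and "R = r + \<delta> - 1"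
    and "inj_on a {..<l}" and "\<forall>i<l. a i \<noteq> 0"
    and "h = (\<Prod>i<l. monom 1 R - [:a i:])"
    and "lead_coeff P = 1" and "irreducible P" and "degree P = m"
    and "h dvd (P - 1)"
    and "poly (map_poly to_ac P) \<alpha> = 0"
    and "\<forall>k\<le>s. degree (g k) \<le> r - 1"
    and "\<forall>k\<le>s. \<forall>i. coeff (g k) i \<in> Fqm m"
    and "f = (\<Sum>k\<le>s. tw_mult CARD('q) (g k)
                 (tw_pow CARD('q) (drinfeld [:\<alpha>, 1:] (monom 1 R)) k))"
    and "f \<noteq> 0"
    and "s + 1 \<le> l"
  shows "\<exists>x \<in> drinfeld_torsion [:\<alpha>, 1:] h. tw_eval CARD('q) f x \<noteq> 0"
proof (rule ccontr)
  assume "\<not> ?thesis"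
  then have f_vanishes: "\<forall>x\<in>drinfeld_torsion [:\<alpha>, 1:] h. tw_eval CARD('q) f x = 0"
    by blast
  have G_zero: "(\<Sum>k\<le>s. smult (to_ac (a j) ^ k) (g k)) = 0" if "j < l" for j
  proof (rule sum_smult_eq_0_if_vanishes_on_torsion)
    have factor: "(monom 1 R - [:a j:]) dvd h"
      unfolding assms(6) using that by (intro dvd_prodI) auto
    show "\<alpha> ^ R \<noteq> to_ac (a j)"
      using poly_map_to_ac_nonzero_if_dvd_diff_1[OF dvd_trans[OF factor assms(10)] assms(11)]
      by (simp add: map_poly_to_ac_diff map_poly_monom map_poly_pCons poly_monom)
    show "\<forall>k\<le>s. degree (g k) < R"
      using assms(1,2,3,12) by force
    show "\<forall>x\<in>drinfeld_torsion [:\<alpha>, 1:] (monom 1 R - [:a j:]).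
        tw_eval CARD('q) (\<Sum>k\<le>s. tw_mult CARD('q) (g k)
          (tw_pow CARD('q) (drinfeld [:\<alpha>, 1:] (monom 1 R)) k)) x = 0"
      unfolding assms(14)[symmetric] using f_vanishes drinfeld_torsion_dvd[OF factor] by blast
  qed
  have inj: "inj_on (\<lambda>j. to_ac (a j)) {..<l}"
    using assms(4) by (simp add: inj_on_def)
  have "g k = 0" if "k \<le> s" for k
    by (rule sum_smult_powers_eq_0_imp_eq_0[OF inj _ G_zero that]) (use assms(16) in simp)
  then have "f = 0"
    by (simp add: assms(14))
  with assms(15) show False
    by contradiction
qed

end
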